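(* Let $a<0$, $I=(a,+\infty)$, and let $V\in C^2(I)$ satisfy $\lim_{u\to a^+}V(u)=h^*>0$, $\lim_{u\to a^+}V'(u)=-\infty$, $V(0)=V'(0)=0$, $V''(0)>0$, $uV'(u)>0$ for all $u\in I\setminus\{0\}$, and $V(u)\to+\infty$ as $u\to+\infty$. Let $\beta>0$ be the point with $V(\beta)=h^*$. If $u/V'(u)\to+\infty$ as $u\to+\infty$ and $V''(u)>0$ for all $u>\beta$, then the extended period function satisfies $T(h)\to+\infty$ as $h\to+\infty$.
   Context: For $h\in(0,h^* )$ let $a<u^-(h)<0<u^+(h)$ be the two solutions of $V(u)=h$; for $h\ge h^*$ let $u^+(h)>0$ be the positive solution of $V(u)=h$. Define $T_p(h)=\sqrt2\int_{u^-(h)}^{u^+(h)}\frac{du}{\sqrt{h-V(u)}}$ for $0<h<h^*$ and $T_b(h)=\sqrt2\int_{a}^{u^+(h)}\frac{du}{\sqrt{h-V(u)}}$ for $h\ge h^*$. The extended period function (of the equation $\ddot u+V'(u)=0$) is $T(h)=T_p(h)$ for $0<h<h^*$ and $T(h)=T_b(h)$ for $h\ge h^*$. *)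

theory Defs
  imports "HOL-Analysis.Analysis"
begin

definition uplus :: "(real \<Rightarrow> real) \<Rightarrow> real \<Rightarrow> real" where
  "uplus V h = (THE u. 0 < u \<and> V u = h)"

definition uminus_lvl :: "(real \<Rightarrow> real) \<Rightarrow> real \<Rightarrow> real \<Rightarrow> real" where
  "uminus_lvl V a h = (THE u. a < u \<and> u < 0 \<and> V u = h)"

text \<open>Period integrals, as (possibly infinite) nonnegative Lebesgue integrals of the
  improper integrals sqrt 2 * int du / sqrt(h - V u).\<close>

definition Tp :: "(real \<Rightarrow> real) \<Rightarrow> real \<Rightarrow> real \<Rightarrow> ennreal" where
  "Tp V a h = ennreal (sqrt 2) *
     (\<integral>\<^sup>+ u. indicator {uminus_lvl V a h<..<uplus V h} u * ennreal (1 / sqrt (h - V u)) \<partial>lborel)"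

definition Tb :: "(real \<Rightarrow> real) \<Rightarrow> real \<Rightarrow> real \<Rightarrow> ennreal" where
  "Tb V a h = ennreal (sqrt 2) *
     (\<integral>\<^sup>+ u. indicator {a<..<uplus V h} u * ennreal (1 / sqrt (h - V u)) \<partial>lborel)"

definition Tper :: "(real \<Rightarrow> real) \<Rightarrow> real \<Rightarrow> real \<Rightarrow> real \<Rightarrow> ennreal" where
  "Tper V a hs h = (if h < hs then Tp V a h else Tb V a h)"

end

theory Submission
  imports Defs
begin

text \<open>For h > h* the period is \<open>T\<^sub>b(h)\<close>, and we only keep the part \<open>(\<beta>, p)\<close>,
  \<open>p = u\<^sup>+(h)\<close>, of its integration interval. There V is convex, so it lies above its
  tangent at p and \<open>h - V u \<le> (p - u) V'(p) \<le> (p - \<beta>) V'(p)\<close>. Hence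
  \<open>T(h) \<ge> sqrt (2 (p - \<beta>) / V'(p))\<close>, which tends to infinity because \<open>p \<rightarrow> \<infinity>\<close>
  as \<open>h \<rightarrow> \<infinity>\<close> and \<open>p / V'(p) \<rightarrow> \<infinity>\<close>.\<close>

lemma strict_mono_on_atLeast_if_deriv_pos:
  fixes f f' :: "real \<Rightarrow> real"
  assumes deriv: "\<And>x. c \<le> x \<Longrightarrow> (f has_real_derivative f' x) (at x)"
    and pos: "\<And>x. c < x \<Longrightarrow> f' x > 0"
  shows "strict_mono_on {c..} f"
proof (rule strict_mono_onI)
  fix r s assume r: "r \<in> {c..}" and "s \<in> {c..}" "r < s"
  show "f r < f s"
  proof (rule DERIV_pos_imp_increasing_open[OF \<open>r < s\<close>])
    fix x assume "r < x" "x < s"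
    with r have "c < x" by simp
    then show "\<exists>y. (f has_real_derivative y) (at x) \<and> y > 0"
      using deriv[of x] pos[of x] by auto
  next
    show "continuous_on {r..s} f"
      using r by (intro continuous_at_imp_continuous_on ballI DERIV_isCont[OF deriv]) auto
  qed
qed

lemma uplus_level:
  fixes V :: "real \<Rightarrow> real"
  assumes mono: "strict_mono_on {0..} V" and cont: "continuous_on {0..} V"
    and V_top: "filterlim V at_top at_top" and h: "V 0 < h"
  shows "uplus V h > 0" and "V (uplus V h) = h"
proof -
  obtain X where X: "\<And>x. x \<ge> X \<Longrightarrow> V x \<ge> h"
    using V_top unfolding filterlim_at_top eventually_at_top_linorder by blast
  have "\<exists>p. 0 \<le> p \<and> p \<le> max X 0 \<and> V p = h"
    using X[of "max X 0"] h
    by (intro IVT') (auto intro: continuous_on_subset[OF cont])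
  then obtain p where p: "p \<ge> 0" "V p = h" by blast
  with h have "p > 0" by (cases "p = 0") auto
  have "\<exists>!p. 0 < p \<and> V p = h"
  proof (rule ex1I)
    show "0 < p \<and> V p = h" using \<open>p > 0\<close> p by simp
    show "q = p" if "0 < q \<and> V q = h" for q
      using that p strict_mono_on_eqD[OF mono, of p q] by simp
  qed
  then have "0 < uplus V h \<and> V (uplus V h) = h"
    unfolding uplus_def by (rule theI')
  then show "uplus V h > 0" and "V (uplus V h) = h" by auto
qed

lemma filterlim_uplus_at_top:
  fixes V :: "real \<Rightarrow> real"
  assumes mono: "strict_mono_on {0..} V" and cont: "continuous_on {0..} V"
    and V_top: "filterlim V at_top at_top"
  shows "filterlim (uplus V) at_top at_top"
  unfolding filterlim_at_top
proof
  fix Z :: real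
  show "\<forall>\<^sub>F h in at_top. Z \<le> uplus V h"
    using eventually_gt_at_top[of "max (V (max Z 0)) (V 0)"]
  proof eventually_elim
    case (elim h)
    then have h: "V 0 < h" "V (max Z 0) < h" by auto
    note level = uplus_level[OF mono cont V_top \<open>V 0 < h\<close>]
    have "V (uplus V h) < V (max Z 0)" if "uplus V h < max Z 0"
      using strict_mono_onD[OF mono _ _ that] level by simp
    then show ?case using level h by fastforce
  qed
qed

lemma diff_bounds_of_mono_deriv:
  fixes V V' :: "real \<Rightarrow> real"
  assumes "u < p"
    and V_deriv: "\<And>x. u \<le> x \<Longrightarrow> x \<le> p \<Longrightarrow> (V has_real_derivative V' x) (at x)"
    and V'_mono: "mono_on {u..p} V'" and V'_pos: "\<And>x. u < x \<Longrightarrow> x \<le> p \<Longrightarrow> V' x > 0"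
  shows "0 < V p - V u" and "V p - V u \<le> (p - u) * V' p"
proof -
  obtain z where z: "u < z" "z < p" and diff: "V p - V u = (p - u) * V' z"
    using MVT2[OF \<open>u < p\<close> V_deriv] by blast
  show "0 < V p - V u"
    unfolding diff using \<open>u < p\<close> V'_pos[of z] z by simp
  have "V' z \<le> V' p"
    using mono_onD[OF V'_mono, of z p] z by simp
  then show "V p - V u \<le> (p - u) * V' p"
    unfolding diff using \<open>u < p\<close> by (simp add: mult_left_mono)
qed

lemma nn_integral_inverse_sqrt_ge:
  fixes f :: "real \<Rightarrow> real"
  assumes "a \<le> \<beta>" "\<beta> < p" "K > 0"
    and f_bounds: "\<And>u. \<beta> < u \<Longrightarrow> u < p \<Longrightarrow> 0 < f u \<and> f u \<le> K"
  shows "ennreal ((p - \<beta>) / sqrt K)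
    \<le> (\<integral>\<^sup>+ u. indicator {a<..<p} u * ennreal (1 / sqrt (f u)) \<partial>lborel)"
proof -
  have pointwise: "ennreal (1 / sqrt K) * indicator {\<beta><..<p} u
      \<le> indicator {a<..<p} u * ennreal (1 / sqrt (f u))" for u
  proof (cases "\<beta> < u \<and> u < p")
    case True
    then have "1 / sqrt K \<le> 1 / sqrt (f u)"
      using f_bounds[of u] by (intro divide_left_mono real_sqrt_le_mono) auto
    with True \<open>a \<le> \<beta>\<close> show ?thesis by (simp add: ennreal_leI)
  qed auto
  have "ennreal ((p - \<beta>) / sqrt K) = ennreal (1 / sqrt K) * ennreal (p - \<beta>)"
    using \<open>\<beta> < p\<close> \<open>K > 0\<close> by (simp add: ennreal_mult[symmetric])
  also have "\<dots> = (\<integral>\<^sup>+ u. ennreal (1 / sqrt K) * indicator {\<beta><..<p} u \<partial>lborel)"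
    using \<open>\<beta> < p\<close> by (simp add: nn_integral_cmult_indicator)
  also have "\<dots> \<le> (\<integral>\<^sup>+ u. indicator {a<..<p} u * ennreal (1 / sqrt (f u)) \<partial>lborel)"
    by (intro nn_integral_mono pointwise)
  finally show ?thesis .
qed

lemma Tb_ge_sqrt_quotient:
  fixes V V' :: "real \<Rightarrow> real"
  assumes "a \<le> \<beta>" "\<beta> < p" and p: "uplus V h = p" "V p = h"
    and V_deriv: "\<And>x. \<beta> \<le> x \<Longrightarrow> x \<le> p \<Longrightarrow> (V has_real_derivative V' x) (at x)"
    and V'_mono: "mono_on {\<beta>..p} V'" and V'_pos: "\<And>x. \<beta> < x \<Longrightarrow> x \<le> p \<Longrightarrow> V' x > 0"
  shows "ennreal (sqrt (2 * (p - \<beta>) / V' p)) \<le> Tb V a h"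
proof -
  define K where "K = (p - \<beta>) * V' p"
  have "V' p > 0" using V'_pos \<open>\<beta> < p\<close> by simp
  then have "K > 0" unfolding K_def using \<open>\<beta> < p\<close> by simp
  have gap: "0 < h - V u \<and> h - V u \<le> K" if "\<beta> < u" "u < p" for u
  proof -
    have "mono_on {u..p} V'" using \<open>\<beta> < u\<close> by (intro mono_on_subset[OF V'_mono]) auto
    note bounds = diff_bounds_of_mono_deriv[OF \<open>u < p\<close> _ this, of V]
    have "(p - u) * V' p \<le> K"
      unfolding K_def using \<open>\<beta> < u\<close> \<open>V' p > 0\<close> by (simp add: mult_right_mono)
    with bounds V_deriv V'_pos that p show ?thesis by force
  qed
  have "(p - \<beta>) / V' p = (p - \<beta>)\<^sup>2 / K"
    unfolding K_def using \<open>\<beta> < p\<close> \<open>V' p > 0\<close> by (simp add: power2_eq_square)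
  then have "sqrt (2 * (p - \<beta>) / V' p) = sqrt 2 * sqrt ((p - \<beta>)\<^sup>2 / K)"
    by (metis real_sqrt_mult times_divide_eq_right)
  also have "\<dots> = sqrt 2 * ((p - \<beta>) / sqrt K)"
    using \<open>\<beta> < p\<close> by (simp add: real_sqrt_divide)
  finally have sqrt_eq: "sqrt (2 * (p - \<beta>) / V' p) = sqrt 2 * ((p - \<beta>) / sqrt K)" .
  have "ennreal (sqrt (2 * (p - \<beta>) / V' p))
      = ennreal (sqrt 2) * ennreal ((p - \<beta>) / sqrt K)"
    unfolding sqrt_eq
    using \<open>\<beta> < p\<close> \<open>K > 0\<close> by (intro ennreal_mult) auto
  also have "\<dots> \<le> ennreal (sqrt 2) *
      (\<integral>\<^sup>+ u. indicator {a<..<p} u * ennreal (1 / sqrt (h - V u)) \<partial>lborel)"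
    using nn_integral_inverse_sqrt_ge[OF \<open>a \<le> \<beta>\<close> \<open>\<beta> < p\<close> \<open>K > 0\<close> gap]
    by (intro mult_left_mono) auto
  finally show ?thesis unfolding Tb_def p(1) .
qed

lemma Tper_ge_sqrt_quotient:
  fixes V V' :: "real \<Rightarrow> real"
  assumes "a \<le> \<beta>" "0 < \<beta>" and V_beta: "V \<beta> = hs" and "hs < h"
    and V_mono: "strict_mono_on {0..} V"
    and level: "uplus V h > 0" "V (uplus V h) = h"
    and V_deriv: "\<And>x. \<beta> \<le> x \<Longrightarrow> (V has_real_derivative V' x) (at x)"
    and V'_mono: "mono_on {\<beta>..} V'" and V'_pos: "\<And>x. \<beta> < x \<Longrightarrow> V' x > 0"
  shows "ennreal (sqrt (2 * (uplus V h - \<beta>) / V' (uplus V h))) \<le> Tper V a hs h"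
proof -
  have "\<beta> < uplus V h"
  proof (rule ccontr)
    assume "\<not> \<beta> < uplus V h"
    then have "V (uplus V h) \<le> V \<beta>"
      using strict_mono_on_leD[OF V_mono] level(1) \<open>0 < \<beta>\<close> by simp
    with V_beta \<open>hs < h\<close> level(2) show False by simp
  qed
  then have "ennreal (sqrt (2 * (uplus V h - \<beta>) / V' (uplus V h))) \<le> Tb V a h"
    using V_deriv V'_pos
    by (intro Tb_ge_sqrt_quotient[where p = "uplus V h", OF \<open>a \<le> \<beta>\<close> _ refl level(2)]
        mono_on_subset[OF V'_mono]) auto
  with \<open>hs < h\<close> show ?thesis unfolding Tper_def by simp
qed

lemma filterlim_sqrt_shifted_quotient_at_top:
  fixes f :: "real \<Rightarrow> real"
  assumes quot: "filterlim (\<lambda>u. u / f u) at_top at_top" and "c > 0"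
  shows "filterlim (\<lambda>u. sqrt (c * (u - \<beta>) / f u)) at_top at_top"
proof -
  have "((\<lambda>u. c * (1 - \<beta> / u)) \<longlongrightarrow> c * (1 - 0)) at_top"
    by (intro tendsto_intros tendsto_divide_0[OF tendsto_const]
        filterlim_at_top_imp_at_infinity filterlim_ident)
  then have lim: "filterlim (\<lambda>u. c * (1 - \<beta> / u) * (u / f u)) at_top at_top"
    using \<open>c > 0\<close> by (intro filterlim_tendsto_pos_mult_at_top[OF _ _ quot]) simp_all
  have eq: "\<forall>\<^sub>F u in at_top. c * (1 - \<beta> / u) * (u / f u) = c * (u - \<beta>) / f u"
    using eventually_gt_at_top[of 0]
  proof eventually_elim
    case (elim u)
    then have "c * (1 - \<beta> / u) * u = c * (u - \<beta>)" by (simp add: field_simps)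
    then show ?case by (metis times_divide_eq_right)
  qed
  have "filterlim (\<lambda>u. c * (u - \<beta>) / f u) at_top at_top"
    using filterlim_cong[OF refl refl eq] lim by simp
  then show ?thesis by (rule filterlim_compose[OF sqrt_at_top])
qed

theorem lemma2p2:
  fixes V V' V'' :: "real \<Rightarrow> real" and a hs \<beta> :: real
  assumes a_neg: "a < 0"
    and V_deriv: "\<And>u. a < u \<Longrightarrow> (V has_real_derivative V' u) (at u)"
    and V'_deriv: "\<And>u. a < u \<Longrightarrow> (V' has_real_derivative V'' u) (at u)"
    and V''_cont: "continuous_on {a<..} V''"
    and lim_V_a: "(V \<longlongrightarrow> hs) (at_right a)"
    and hs_pos: "hs > 0"
    and lim_V'_a: "filterlim V' at_bot (at_right a)"
    and V0: "V 0 = 0" and V'0: "V' 0 = 0" and V''0: "V'' 0 > 0"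
    and sign: "\<And>u. a < u \<Longrightarrow> u \<noteq> 0 \<Longrightarrow> u * V' u > 0"
    and V_infty: "filterlim V at_top at_top"
    and beta_pos: "\<beta> > 0" and V_beta: "V \<beta> = hs"
    and quot_infty: "filterlim (\<lambda>u. u / V' u) at_top at_top"
    and convex: "\<And>u. u > \<beta> \<Longrightarrow> V'' u > 0"
  shows "((\<lambda>h. Tper V a hs h) \<longlongrightarrow> \<infinity>) at_top"
proof -
  have V'_pos: "V' u > 0" if "u > 0" for u
    using sign[of u] that a_neg by (simp add: zero_less_mult_iff)
  have V_mono: "strict_mono_on {0..} V"
    using V_deriv V'_pos a_neg by (intro strict_mono_on_atLeast_if_deriv_pos[where f' = V']) auto
  have V'_mono: "strict_mono_on {\<beta>..} V'"
    using V'_deriv convex a_neg beta_pos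
    by (intro strict_mono_on_atLeast_if_deriv_pos[where f' = V'']) auto
  have V_cont: "continuous_on {0..} V"
    using a_neg by (intro continuous_at_imp_continuous_on ballI DERIV_isCont[OF V_deriv]) auto
  let ?bound = "\<lambda>h. sqrt (2 * (uplus V h - \<beta>) / V' (uplus V h))"
  have lower: "\<forall>\<^sub>F h in at_top. ennreal (?bound h) \<le> Tper V a hs h"
    using eventually_gt_at_top[of hs]
  proof eventually_elim
    case (elim h)
    with hs_pos V0 have "V 0 < h" by simp
    note level = uplus_level[OF V_mono V_cont V_infty this]
    show ?case
      using a_neg beta_pos V_deriv V'_pos strict_mono_on_imp_mono_on[OF V'_mono]
      by (intro Tper_ge_sqrt_quotient[OF _ beta_pos V_beta elim V_mono level]) auto
  qed
  have "filterlim ?bound at_top at_top"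
    using filterlim_compose[OF filterlim_sqrt_shifted_quotient_at_top[OF quot_infty, where c = 2]
        filterlim_uplus_at_top[OF V_mono V_cont V_infty]] by simp
  then have lim: "((\<lambda>h. ennreal (?bound h)) \<longlongrightarrow> \<infinity>) at_top"
    by (simp add: ennreal_tendsto_top_eq_at_top)
  show ?thesis
    by (rule tendsto_sandwich[OF lower _ lim tendsto_const]) simp
qed

end
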